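(* For every $p>1$ there is a constant $c(p)$ such that the following holds. Let $0<R<2$ and $f\in L^p(-R,R)$, and define for $(x,y)\in\mathbb{R}^2$ $$g(x,y)=\int_{B_R}\frac{f(y_1)}{|(x,y)-(x_1,y_1)|}\,dx_1\,dy_1 ,$$ where $B_R\subset\mathbb{R}^2$ is the disk of radius $R$ centered at the origin. Then $$|g(x,y)|\le c(p)\,R\Big[\int_{-1}^1|f(Ry_1)|^p\,dy_1\Big]^{1/p}.$$ *)

theory Defs
  imports "HOL-Analysis.Analysis"
begin

end

theory Submission
  imports Defs
begin

text \<open>
  With q the conjugate exponent of p and b = 1/(2q), the kernel is split by the elementary bound
  1 / |(u, v)| \<le> |u| powr -(1 - b) * |v| powr -b.  Integrating out x1 over [-R, R] costs a factor
  (2/b + 2) R powr b, uniformly in the remaining variables, and leaves the one-dimensional integral of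
  |f y1| * |y - y1| powr -b.  Hoelder's inequality bounds it by the L^p norm of f times
  (integral over [-R, R] of |y - y1| powr -(1/2)) powr (1/q), which is at most (6 R powr (1/2)) powr (1/q).
  Collecting the powers of R and rescaling f to the unit interval gives c(p) = (4q + 2) 6 powr (1/q).
\<close>

lemma has_integral_abs_powr_centered:
  fixes e R :: real
  assumes "0 \<le> e" "e < 1" "0 \<le> R"
  shows "((\<lambda>s. \<bar>s\<bar> powr -e) has_integral 2 * (R powr (1 - e) / (1 - e))) {-R..R}"
proof -
  have "((\<lambda>s. s powr -e) has_integral R powr (1 - e) / (1 - e)) {0..R}"
    using has_integral_powr_from_0[of "-e" R] assms by simp
  then have right: "((\<lambda>s. \<bar>s\<bar> powr -e) has_integral R powr (1 - e) / (1 - e)) {0..R}"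
    by (rule has_integral_eq[rotated]) auto
  then have left: "((\<lambda>s. \<bar>s\<bar> powr -e) has_integral R powr (1 - e) / (1 - e)) {-R..0}"
    using has_integral_reflect_lemma_real[OF right] by simp
  show ?thesis
    using has_integral_combine[OF _ _ left right] assms by (simp only: mult_2)
qed

lemma abs_diff_powr_le_near_plus_far:
  fixes e R c t :: real
  assumes "0 \<le> e" "0 < R"
  shows "indicator {-R..R} t * \<bar>c - t\<bar> powr -e
    \<le> indicator {c-R..c+R} t * \<bar>c - t\<bar> powr -e + indicator {-R..R} t * R powr -e"
proof (cases "\<bar>c - t\<bar> \<le> R")
  case False
  then have "\<bar>c - t\<bar> powr -e \<le> R powr -e"
    using assms by (intro powr_mono2') auto
  then show ?thesis by (simp add: indicator_def)
qed (auto simp: indicator_def)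

lemma nn_integral_abs_diff_powr_le:
  fixes e R c :: real
  assumes "0 \<le> e" "e < 1" "0 < R"
  shows "(\<integral>\<^sup>+t. ennreal (indicator {-R..R} t * \<bar>c - t\<bar> powr -e) \<partial>lborel)
    \<le> ennreal ((2 / (1 - e) + 2) * R powr (1 - e))"
proof -
  have near: "(\<integral>\<^sup>+t. ennreal (indicator {c-R..c+R} t * \<bar>c - t\<bar> powr -e) \<partial>lborel)
      = ennreal (2 * (R powr (1 - e) / (1 - e)))"
  proof -
    have "(\<integral>\<^sup>+t. ennreal (indicator {c-R..c+R} t * \<bar>c - t\<bar> powr -e) \<partial>lborel)
        = (\<integral>\<^sup>+s. ennreal (indicator {c-R..c+R} (c + 1 * s) * \<bar>c - (c + 1 * s)\<bar> powr -e) \<partial>lborel)"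
      by (subst nn_integral_real_affine[where c=1 and t=c]) auto
    also have "\<dots> = (\<integral>\<^sup>+s. ennreal (indicator {-R..R} s * \<bar>s\<bar> powr -e) \<partial>lborel)"
      by (intro nn_integral_cong) (auto simp: indicator_def)
    also have "\<dots> = ennreal (2 * (R powr (1 - e) / (1 - e)))"
      using nn_integral_has_integral_lebesgue[OF _ has_integral_abs_powr_centered] assms by simp
    finally show ?thesis .
  qed
  have far: "(\<integral>\<^sup>+t. ennreal (indicator {-R..R} t * R powr -e) \<partial>lborel) = ennreal (2 * R * R powr -e)"
  proof -
    have "(\<integral>\<^sup>+t. ennreal (indicator {-R..R} t * R powr -e) \<partial>lborel)
        = (\<integral>\<^sup>+t. ennreal (R powr -e) * indicator {-R..R} t \<partial>lborel)"
      by (intro nn_integral_cong) (auto simp: indicator_def)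
    also have "\<dots> = ennreal (2 * R * R powr -e)"
      using assms by (simp add: nn_integral_cmult_indicator ennreal_mult[symmetric] mult.commute)
    finally show ?thesis .
  qed
  have "(\<integral>\<^sup>+t. ennreal (indicator {-R..R} t * \<bar>c - t\<bar> powr -e) \<partial>lborel)
      \<le> (\<integral>\<^sup>+t. ennreal (indicator {c-R..c+R} t * \<bar>c - t\<bar> powr -e)
              + ennreal (indicator {-R..R} t * R powr -e) \<partial>lborel)"
    using abs_diff_powr_le_near_plus_far[OF assms(1,3)]
    by (intro nn_integral_mono) (simp add: ennreal_plus[symmetric] del: ennreal_plus)
  also have "\<dots> = ennreal (2 * (R powr (1 - e) / (1 - e))) + ennreal (2 * R * R powr -e)"
    by (simp add: nn_integral_add near far)
  also have "\<dots> = ennreal ((2 / (1 - e) + 2) * R powr (1 - e))"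
  proof -
    have "R * R powr -e = R powr (1 - e)"
      using assms by (simp add: powr_diff powr_minus divide_inverse)
    then show ?thesis
      using assms by (simp add: ennreal_plus[symmetric] del: ennreal_plus) (simp add: algebra_simps)
  qed
  finally show ?thesis .
qed

lemma inverse_norm_le_powr_mult_powr:
  fixes u v a b :: real
  assumes "u \<noteq> 0" "v \<noteq> 0" "0 \<le> a" "0 \<le> b" "a + b = 1"
  shows "1 / sqrt (u\<^sup>2 + v\<^sup>2) \<le> \<bar>u\<bar> powr -a * \<bar>v\<bar> powr -b"
proof -
  define m where "m = max \<bar>u\<bar> \<bar>v\<bar>"
  have pos: "0 < \<bar>u\<bar> powr a * \<bar>v\<bar> powr b"
    using assms by simp
  have "\<bar>u\<bar> powr a * \<bar>v\<bar> powr b \<le> m powr a * m powr b"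
    using assms by (intro mult_mono powr_mono2) (auto simp: m_def)
  also have "\<dots> = m"
    using assms by (simp add: m_def powr_add[symmetric])
  also have "m \<le> sqrt (u\<^sup>2 + v\<^sup>2)"
    by (auto simp: m_def real_le_rsqrt)
  finally have "1 / sqrt (u\<^sup>2 + v\<^sup>2) \<le> 1 / (\<bar>u\<bar> powr a * \<bar>v\<bar> powr b)"
    using pos assms(1) by (intro divide_left_mono) (auto intro!: mult_pos_pos add_pos_nonneg)
  then show ?thesis
    by (simp add: powr_minus divide_inverse)
qed

lemma nonpos_if_le_mult_powr:
  fixes X c e :: real
  assumes "e \<noteq> 0" "0 \<le> c" and le: "\<And>l. 0 < l \<Longrightarrow> X \<le> c * l powr e"
  shows "X \<le> 0"
proof (rule ccontr)
  assume "\<not> X \<le> 0"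
  then have X: "0 < X" by simp
  with le[of 1] have c: "0 < c" by simp
  define l where "l = (X / (2 * c)) powr (1 / e)"
  have "l powr e = X / (2 * c)"
    using X c assms(1) by (simp add: l_def powr_powr)
  then have "X \<le> X / 2"
    using le[of l] X c by (simp add: l_def)
  with X show False by simp
qed

lemma le_powr_mult_powr_if_le_scaled_Young:
  fixes p q A B X :: real
  assumes p: "1 < p" and q: "1 < q" and pq: "1/p + 1/q = 1" and "0 \<le> A" "0 \<le> B"
    and le: "\<And>l. 0 < l \<Longrightarrow> X \<le> l powr p * A / p + B / (q * l powr q)"
  shows "X \<le> A powr (1/p) * B powr (1/q)"
proof -
  consider "A = 0" | "B = 0" | "0 < A" "0 < B"
    using assms by fastforce
  then show ?thesis
  proof cases
    case 1
    have "X \<le> 0"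
      by (rule nonpos_if_le_mult_powr[of "-q" "B / q"])
         (use le q \<open>0 \<le> B\<close> 1 in \<open>auto simp: powr_minus divide_inverse mult.assoc\<close>)
    then show ?thesis using 1 by simp
  next
    case 2
    have "X \<le> 0"
      by (rule nonpos_if_le_mult_powr[of p "A / p"])
         (use le p \<open>0 \<le> A\<close> 2 in \<open>auto simp: mult.commute\<close>)
    then show ?thesis using 2 by simp
  next
    case 3
    \<comment> \<open>the minimising scale: at this l both terms equal A powr (1/p) * B powr (1/q)\<close>
    define l where "l = (B / A) powr (1 / (p + q))"
    have pq': "p / (p + q) = 1 / q" "q / (p + q) = 1 / p"
      using pq p q by (simp_all add: field_simps)
    have conj: "1 - 1/q = 1/p" "1 - 1/p = 1/q"
      using pq by simp_all
    have "l powr p * A = A powr (1/p) * B powr (1/q)"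
    proof -
      have "l powr p * A = B powr (1/q) * A powr (1 - 1/q)"
        using 3 pq' by (simp add: l_def powr_powr powr_divide powr_diff)
      then show ?thesis by (simp add: conj mult.commute)
    qed
    moreover have "B / l powr q = A powr (1/p) * B powr (1/q)"
    proof -
      have "B / l powr q = A powr (1/p) * B powr (1 - 1/p)"
        using 3 pq' by (simp add: l_def powr_powr powr_divide powr_diff)
      then show ?thesis by (simp add: conj)
    qed
    moreover have "B / (q * l powr q) = (B / l powr q) / q"
      by simp
    ultimately have "l powr p * A / p + B / (q * l powr q) = A powr (1/p) * B powr (1/q) * (1/p + 1/q)"
      by (simp add: algebra_simps)
    then show ?thesis
      using le[of l] 3 pq by (simp add: l_def)
  qed
qed

lemma nn_integral_Hoelder:
  fixes p q A B :: real and u v :: "'a \<Rightarrow> real"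
  assumes p: "1 < p" and q: "1 < q" and pq: "1/p + 1/q = 1"
    and [measurable]: "u \<in> borel_measurable M" "v \<in> borel_measurable M"
    and nonneg: "\<And>x. 0 \<le> u x" "\<And>x. 0 \<le> v x"
    and A: "(\<integral>\<^sup>+x. u x powr p \<partial>M) \<le> ennreal A" "0 \<le> A"
    and B: "(\<integral>\<^sup>+x. v x powr q \<partial>M) \<le> ennreal B" "0 \<le> B"
  shows "(\<integral>\<^sup>+x. u x * v x \<partial>M) \<le> ennreal (A powr (1/p) * B powr (1/q))"
proof -
  define X where "X = (\<integral>\<^sup>+x. u x * v x \<partial>M)"
  have scaled: "X \<le> ennreal (l powr p * A / p + B / (q * l powr q))" if l: "0 < l" for l
  proof -
    have Young: "u x * v x \<le> l powr p / p * u x powr p + 1 / (q * l powr q) * v x powr q" for x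
    proof -
      have "u x * v x = (l * u x) * (v x / l)" using l by simp
      also have "\<dots> \<le> (l * u x) powr p / p + (v x / l) powr q / q"
        using l p q pq nonneg by (intro Youngs_inequality) auto
      finally show ?thesis
        using l nonneg by (simp add: powr_mult powr_divide ac_simps)
    qed
    have "X \<le> (\<integral>\<^sup>+x. ennreal (l powr p / p) * u x powr p + ennreal (1 / (q * l powr q)) * v x powr q \<partial>M)"
      unfolding X_def using Young l p q nonneg
      by (intro nn_integral_mono)
         (simp add: ennreal_plus[symmetric] ennreal_mult[symmetric] ennreal_leI del: ennreal_plus)
    also have "\<dots> = ennreal (l powr p / p) * (\<integral>\<^sup>+x. u x powr p \<partial>M)
        + ennreal (1 / (q * l powr q)) * (\<integral>\<^sup>+x. v x powr q \<partial>M)"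
      by (simp add: nn_integral_add nn_integral_cmult)
    also have "\<dots> \<le> ennreal (l powr p / p) * ennreal A + ennreal (1 / (q * l powr q)) * ennreal B"
      using A B by (intro add_mono mult_left_mono) auto
    also have "\<dots> = ennreal (l powr p * A / p + B / (q * l powr q))"
      using l p q A B by (simp add: ennreal_plus[symmetric] ennreal_mult[symmetric] del: ennreal_plus)
    finally show ?thesis .
  qed
  then obtain r where r: "X = ennreal r" "0 \<le> r"
    using ennreal_cases[of X] by (metis ennreal_neq_top neq_top_trans zero_less_one)
  have "r \<le> A powr (1/p) * B powr (1/q)"
    using p q pq A(2) B(2)
  proof (rule le_powr_mult_powr_if_le_scaled_Young)
    fix l :: real assume "0 < l"
    moreover have "0 \<le> l powr p * A / p + B / (q * l powr q)"
      using \<open>0 < l\<close> p q A(2) B(2) by simp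
    ultimately show "r \<le> l powr p * A / p + B / (q * l powr q)"
      using scaled[of l] r by (simp del: ennreal_plus)
  qed
  then show ?thesis
    using r X_def by (simp add: ennreal_leI)
qed

lemma nn_integral_inverse_dist_le:
  fixes b R x y y1 :: real
  assumes b: "0 < b" "b \<le> 1" and R: "0 < R" and "y1 \<noteq> y"
  shows "(\<integral>\<^sup>+x1. ennreal (indicator {-R..R} x1 / norm ((x, y) - (x1, y1))) \<partial>lborel)
    \<le> ennreal ((2 / b + 2) * R powr b) * ennreal (\<bar>y - y1\<bar> powr -b)"
proof -
  have "AE x1 in lborel. ennreal (indicator {-R..R} x1 / norm ((x, y) - (x1, y1)))
      \<le> ennreal (indicator {-R..R} x1 * \<bar>x - x1\<bar> powr -(1 - b)) * ennreal (\<bar>y - y1\<bar> powr -b)"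
    using AE_lborel_singleton[of x]
  proof eventually_elim
    case (elim x1)
    have "norm ((x, y) - (x1, y1)) = sqrt ((x - x1)\<^sup>2 + (y - y1)\<^sup>2)"
      by (simp add: norm_Pair)
    moreover have "1 / sqrt ((x - x1)\<^sup>2 + (y - y1)\<^sup>2) \<le> \<bar>x - x1\<bar> powr -(1 - b) * \<bar>y - y1\<bar> powr -b"
      using elim assms by (intro inverse_norm_le_powr_mult_powr) auto
    ultimately
    have "indicator {-R..R} x1 / norm ((x, y) - (x1, y1))
        \<le> indicator {-R..R} x1 * \<bar>x - x1\<bar> powr -(1 - b) * \<bar>y - y1\<bar> powr -b"
      by (auto simp: indicator_def)
    then show ?case
      by (simp add: ennreal_mult[symmetric] ennreal_leI del: ennreal_mult)
  qed
  then have "(\<integral>\<^sup>+x1. ennreal (indicator {-R..R} x1 / norm ((x, y) - (x1, y1))) \<partial>lborel)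
      \<le> (\<integral>\<^sup>+x1. ennreal (indicator {-R..R} x1 * \<bar>x - x1\<bar> powr -(1 - b)) \<partial>lborel)
          * ennreal (\<bar>y - y1\<bar> powr -b)"
    by (subst nn_integral_multc[symmetric]) (auto intro: nn_integral_mono_AE)
  also have "\<dots> \<le> ennreal ((2 / b + 2) * R powr b) * ennreal (\<bar>y - y1\<bar> powr -b)"
    using nn_integral_abs_diff_powr_le[of "1 - b" R x] b R by (intro mult_right_mono) auto
  finally show ?thesis .
qed

lemma set_integral_unit_interval_scaled:
  fixes h :: "real \<Rightarrow> real" and R :: real
  assumes R: "0 < R" and h: "set_borel_measurable lborel {-R<..<R} h"
  shows "(LINT t:{-1..1}|lborel. h (R * t)) = (LINT t:{-R<..<R}|lborel. h t) / R"
proof -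
  define hR where "hR t = indicator {-R<..<R} t * h t" for t
  have [measurable]: "hR \<in> borel_measurable borel"
    using h unfolding set_borel_measurable_def hR_def[abs_def] by simp
  have eq: "indicator {-1..1} t * h (R * t) = hR (0 + R * t)" if "t \<noteq> 1" "t \<noteq> -1" for t
  proof -
    have "-R < R * t \<and> R * t < R \<longleftrightarrow> -1 < t \<and> t < 1"
      using R by (metis minus_mult_right mult.right_neutral mult_less_cancel_left_pos)
    then show ?thesis
      using that by (auto simp: hR_def indicator_def)
  qed
  have "(LINT t:{-1..1}|lborel. h (R * t)) = (\<integral>t. hR (0 + R * t) \<partial>lborel)"
    unfolding set_lebesgue_integral_def
  proof (rule integral_cong_AE)
    show "(\<lambda>t. indicator {-1..1} t *\<^sub>R h (R * t)) \<in> borel_measurable lborel"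
      by (rule measurable_discrete_difference[where X="{-1, 1}" and f="\<lambda>t. hR (0 + R * t)"])
         (auto simp: eq)
    show "AE t in lborel. indicator {-1..1} t *\<^sub>R h (R * t) = hR (0 + R * t)"
      using AE_lborel_singleton[of 1] AE_lborel_singleton[of "-1"]
      by eventually_elim (simp add: eq)
  qed simp
  also have "\<dots> = (\<integral>t. hR t \<partial>lborel) / R"
    using lborel_integral_real_affine[of R hR 0] R by simp
  finally show ?thesis
    by (simp add: hR_def set_lebesgue_integral_def)
qed

lemma nn_integral_potential_le:
  fixes p q R A x y :: real and g :: "real \<Rightarrow> real"
  assumes p: "1 < p" and q: "1 < q" and pq: "1/p + 1/q = 1" and R: "0 < R"
    and [measurable]: "g \<in> borel_measurable borel"
    and A: "(\<integral>\<^sup>+t. ennreal (\<bar>g t\<bar> powr p) \<partial>lborel) \<le> ennreal A" "0 \<le> A"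
  shows "(\<integral>\<^sup>+z. ennreal (indicator (ball 0 R) z * \<bar>g (snd z)\<bar> / norm ((x, y) - z)) \<partial>lborel)
    \<le> ennreal ((4 * q + 2) * 6 powr (1/q) * R powr (1/q) * A powr (1/p))"
proof -
  \<comment> \<open>b q = 1/2 < 1 keeps the q-th power of the kernel in y locally integrable\<close>
  define b where "b = 1 / (2 * q)"
  have b: "0 < b" "b \<le> 1"
    using q by (auto simp: b_def)
  define H where "H = (2 / b + 2) * R powr b"
  define v where "v y1 = indicator {-R..R} y1 * \<bar>y - y1\<bar> powr -b" for y1
  have [measurable]: "v \<in> borel_measurable borel"
    by (simp add: v_def[abs_def])
  have inner: "(\<integral>\<^sup>+x1. ennreal (indicator (ball 0 R) (x1, y1) * \<bar>g y1\<bar> / norm ((x, y) - (x1, y1))) \<partial>lborel)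
      \<le> ennreal H * ennreal (\<bar>g y1\<bar> * v y1)" if "y1 \<noteq> y" for y1
  proof -
    have "indicator (ball 0 R) (x1, y1) * \<bar>g y1\<bar> / norm ((x, y) - (x1, y1))
        \<le> indicator {-R..R} x1 / norm ((x, y) - (x1, y1)) * (indicator {-R..R} y1 * \<bar>g y1\<bar>)" for x1
    proof -
      have "indicator (ball 0 R) (x1, y1) \<le> indicator {-R..R} x1 * (indicator {-R..R} y1 :: real)"
        using norm_fst_le[where x=x1 and y=y1] norm_snd_le[where x=x1 and y=y1]
        by (auto simp: indicator_def abs_le_iff)
      then have "indicator (ball 0 R) (x1, y1) * (\<bar>g y1\<bar> / norm ((x, y) - (x1, y1)))
          \<le> indicator {-R..R} x1 * indicator {-R..R} y1 * (\<bar>g y1\<bar> / norm ((x, y) - (x1, y1)))"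
        by (intro mult_right_mono) auto
      then show ?thesis
        by (simp add: mult_ac)
    qed
    then have "(\<integral>\<^sup>+x1. ennreal (indicator (ball 0 R) (x1, y1) * \<bar>g y1\<bar> / norm ((x, y) - (x1, y1))) \<partial>lborel)
        \<le> (\<integral>\<^sup>+x1. ennreal (indicator {-R..R} x1 / norm ((x, y) - (x1, y1)))
              * ennreal (indicator {-R..R} y1 * \<bar>g y1\<bar>) \<partial>lborel)"
      by (intro nn_integral_mono) (simp add: ennreal_mult[symmetric] ennreal_leI del: ennreal_mult)
    also have "\<dots> \<le> ennreal H * ennreal (\<bar>y - y1\<bar> powr -b) * ennreal (indicator {-R..R} y1 * \<bar>g y1\<bar>)"
      unfolding H_def using nn_integral_inverse_dist_le[OF b R that]
      by (subst nn_integral_multc) (auto intro: mult_right_mono)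
    also have "\<dots> = ennreal H * ennreal (\<bar>g y1\<bar> * v y1)"
      by (simp add: v_def ennreal_mult'[symmetric] mult_ac)
    finally show ?thesis .
  qed
  have v_powr: "v y1 powr q = indicator {-R..R} y1 * \<bar>y - y1\<bar> powr -(1/2)" for y1
    using q by (simp add: v_def indicator_def powr_powr b_def)
  have Hoelder: "(\<integral>\<^sup>+y1. ennreal (\<bar>g y1\<bar> * v y1) \<partial>lborel)
      \<le> ennreal (A powr (1/p) * (6 * R powr (1/2)) powr (1/q))"
  proof (rule nn_integral_Hoelder[OF p q pq _ _ _ _ A])
    show "(\<integral>\<^sup>+y1. ennreal (v y1 powr q) \<partial>lborel) \<le> ennreal (6 * R powr (1/2))"
      unfolding v_powr using nn_integral_abs_diff_powr_le[of "1/2" R y] R by simp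
  qed (use R in \<open>auto simp: v_def\<close>)
  have "(\<integral>\<^sup>+z. ennreal (indicator (ball 0 R) z * \<bar>g (snd z)\<bar> / norm ((x, y) - z)) \<partial>lborel)
      = (\<integral>\<^sup>+y1. \<integral>\<^sup>+x1. ennreal (indicator (ball 0 R) (x1, y1) * \<bar>g y1\<bar> / norm ((x, y) - (x1, y1))) \<partial>lborel \<partial>lborel)"
  proof -
    have [measurable]: "ball 0 R \<in> sets (lborel \<Otimes>\<^sub>M lborel)"
      "(\<lambda>z. norm ((x, y) - z)) \<in> borel_measurable (lborel \<Otimes>\<^sub>M lborel)"
      unfolding lborel_prod by (auto intro!: borel_measurable_continuous_onI continuous_intros)
    have "(\<lambda>z. ennreal (indicator (ball 0 R) z * \<bar>g (snd z)\<bar> / norm ((x, y) - z)))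
        \<in> borel_measurable (lborel \<Otimes>\<^sub>M lborel)"
      by measurable
    from lborel_pair.nn_integral_snd[OF this] show ?thesis
      by (simp add: lborel_prod)
  qed
  also have "\<dots> \<le> (\<integral>\<^sup>+y1. ennreal H * ennreal (\<bar>g y1\<bar> * v y1) \<partial>lborel)"
    by (rule nn_integral_mono_AE, rule eventually_mono[OF AE_lborel_singleton[of y]], erule inner)
  also have "\<dots> \<le> ennreal H * ennreal (A powr (1/p) * (6 * R powr (1/2)) powr (1/q))"
    using Hoelder by (subst nn_integral_cmult) (auto intro: mult_left_mono)
  also have "\<dots> = ennreal ((4 * q + 2) * 6 powr (1/q) * R powr (1/q) * A powr (1/p))"
  proof -
    have "R powr b * (6 * R powr (1/2)) powr (1/q) = 6 powr (1/q) * R powr (1/q)"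
      using R q by (simp add: b_def powr_mult powr_powr powr_add[symmetric])
    then show ?thesis
      using q b by (simp add: H_def ennreal_mult'[symmetric] b_def mult_ac)
  qed
  finally show ?thesis .
qed

lemma abs_set_integral_potential_le:
  fixes p q R x y :: real and f :: "real \<Rightarrow> real"
  assumes p: "1 < p" and q: "1 < q" and pq: "1/p + 1/q = 1" and R: "0 < R"
    and f: "set_borel_measurable lborel {-R<..<R} f"
    and fp: "set_integrable lborel {-R<..<R} (\<lambda>t. \<bar>f t\<bar> powr p)"
  shows "\<bar>LINT z : ball (0::real \<times> real) R | lborel. f (snd z) / norm ((x, y) - z)\<bar>
    \<le> (4 * q + 2) * 6 powr (1/q) * R powr (1/q) * (LINT t:{-R<..<R}|lborel. \<bar>f t\<bar> powr p) powr (1/p)"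
proof -
  define fR where "fR t = indicator {-R<..<R} t * f t" for t
  define A where "A = (LINT t:{-R<..<R}|lborel. \<bar>f t\<bar> powr p)"
  have [measurable]: "fR \<in> borel_measurable borel"
    using f unfolding set_borel_measurable_def fR_def[abs_def] by simp
  have fRp: "\<bar>fR t\<bar> powr p = indicator {-R<..<R} t *\<^sub>R \<bar>f t\<bar> powr p" for t
    by (simp add: fR_def indicator_def)
  have "A = (\<integral>t. \<bar>fR t\<bar> powr p \<partial>lborel)"
    unfolding fRp A_def set_lebesgue_integral_def ..
  moreover have "integrable lborel (\<lambda>t. \<bar>fR t\<bar> powr p)"
    unfolding fRp using fp unfolding set_integrable_def .
  ultimately have A: "(\<integral>\<^sup>+t. ennreal (\<bar>fR t\<bar> powr p) \<partial>lborel) = ennreal A" "0 \<le> A"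
    by (simp_all add: nn_integral_eq_integral)
  have "\<bar>indicator (ball 0 R) z *\<^sub>R (f (snd z) / norm ((x, y) - z))\<bar>
      = indicator (ball 0 R) z * \<bar>fR (snd z)\<bar> / norm ((x, y) - z)" for z :: "real \<times> real"
    using norm_snd_le[where x="fst z" and y="snd z"]
    by (cases z) (auto simp: fR_def indicator_def abs_less_iff)
  then have "(\<integral>\<^sup>+z. ennreal \<bar>indicator (ball 0 R) z *\<^sub>R (f (snd z) / norm ((x, y) - z))\<bar> \<partial>lborel)
      = (\<integral>\<^sup>+z. ennreal (indicator (ball 0 R) z * \<bar>fR (snd z)\<bar> / norm ((x, y) - z)) \<partial>lborel)"
    by presburger
  also have "\<dots> \<le> ennreal ((4 * q + 2) * 6 powr (1/q) * R powr (1/q) * A powr (1/p))"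
    by (rule nn_integral_potential_le[OF p q pq R _ _ A(2)]) (simp_all add: A(1))
  finally have "(\<integral>\<^sup>+z. ennreal \<bar>indicator (ball 0 R) z *\<^sub>R (f (snd z) / norm ((x, y) - z))\<bar> \<partial>lborel)
      \<le> ennreal ((4 * q + 2) * 6 powr (1/q) * R powr (1/q) * A powr (1/p))" .
  then have "(\<integral>z. \<bar>indicator (ball 0 R) z *\<^sub>R (f (snd z) / norm ((x, y) - z))\<bar> \<partial>lborel)
      \<le> (4 * q + 2) * 6 powr (1/q) * R powr (1/q) * A powr (1/p)"
    using q by (intro integral_real_bounded) auto
  then show ?thesis
    unfolding A_def set_lebesgue_integral_def by (rule order_trans[OF integral_abs_bound])
qed

theorem corollary3p7:
  fixes p :: real
  assumes "p > 1"
  shows "\<exists>c::real. \<forall>(R::real) (f::real \<Rightarrow> real) (x::real) (y::real).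
           0 < R \<longrightarrow> R < 2 \<longrightarrow>
           set_borel_measurable lborel {-R<..<R} f \<longrightarrow>
           set_integrable lborel {-R<..<R} (\<lambda>t. \<bar>f t\<bar> powr p) \<longrightarrow>
           \<bar>LINT z : ball (0::real \<times> real) R | lborel. f (snd z) / norm ((x, y) - z)\<bar>
             \<le> c * R * (LINT t : {-1..1} | lborel. \<bar>f (R * t)\<bar> powr p) powr (1 / p)"
proof -
  define q where "q = p / (p - 1)"
  have q: "1 < q" and pq: "1/p + 1/q = 1"
    using assms by (auto simp: q_def field_simps)
  \<comment> \<open>the bound holds for every R > 0\<close>
  show ?thesis
  proof (intro exI[of _ "(4 * q + 2) * 6 powr (1/q)"] allI impI)
    fix R :: real and f :: "real \<Rightarrow> real" and x y :: real
    assume R: "0 < R" and f: "set_borel_measurable lborel {-R<..<R} f"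
      and fp: "set_integrable lborel {-R<..<R} (\<lambda>t. \<bar>f t\<bar> powr p)"
    define A where "A = (LINT t:{-R<..<R}|lborel. \<bar>f t\<bar> powr p)"
    have rescaled: "(LINT t:{-1..1}|lborel. \<bar>f (R * t)\<bar> powr p) = A / R"
      unfolding A_def using R fp unfolding set_integrable_def
      by (intro set_integral_unit_interval_scaled) (simp_all add: set_borel_measurable_def)
    have "1/q = 1 - 1/p"
      using pq by simp
    then have "R powr (1/q) * A powr (1/p) = R * (A / R) powr (1/p)"
      using R by (simp add: powr_diff powr_divide)
    then show "\<bar>LINT z : ball (0::real \<times> real) R | lborel. f (snd z) / norm ((x, y) - z)\<bar>
        \<le> (4 * q + 2) * 6 powr (1/q) * R * (LINT t:{-1..1}|lborel. \<bar>f (R * t)\<bar> powr p) powr (1 / p)"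
      using abs_set_integral_potential_le[OF assms q pq R f fp, of x y]
      by (simp add: rescaled A_def mult.assoc)
  qed
qed

end
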